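(* Let $n\ge 2$ and let $G$ be a complete $n$-partite graph whose vertex set is partitioned into partite sets $V_1,\dots,V_n$ with $a_i=|V_i|\ge 1$ for each $i$. Then $$\tau(G)=\frac12\left[\left(\sum_{i=1}^n a_i\right)^2-\sum_{i=1}^n a_i^2\right],$$ and for $v\in V_j$, $TDV(v)=\left(\sum_{i=1}^n a_i\right)-a_j$.
   Context: A set $D \subseteq V(G)$ is a total dominating set of $G$ if every vertex of $G$ has a neighbor in $D$. $\gamma_t(G)$ is the minimum cardinality of a total dominating set; a minimum one is a $\gamma_t(G)$-set. $\tau(G)$ is the number of $\gamma_t(G)$-sets and $TDV(v)$ is the number of $\gamma_t(G)$-sets containing $v$. *)

theory Defs
  imports Complex_Main
begin

text \<open>A simple graph is given by a vertex set V and an adjacency relation E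
  (symmetric, irreflexive, on V).\<close>

definition total_dominating :: "'a set \<Rightarrow> ('a \<Rightarrow> 'a \<Rightarrow> bool) \<Rightarrow> 'a set \<Rightarrow> bool" where
  "total_dominating V E D \<longleftrightarrow> D \<subseteq> V \<and> (\<forall>v\<in>V. \<exists>u\<in>D. E v u)"

definition gamma_t :: "'a set \<Rightarrow> ('a \<Rightarrow> 'a \<Rightarrow> bool) \<Rightarrow> nat" where
  "gamma_t V E = (LEAST k. \<exists>D. total_dominating V E D \<and> finite D \<and> card D = k)"

definition gamma_t_sets :: "'a set \<Rightarrow> ('a \<Rightarrow> 'a \<Rightarrow> bool) \<Rightarrow> 'a set set" where
  "gamma_t_sets V E = {D. total_dominating V E D \<and> finite D \<and> card D = gamma_t V E}"

definition tau :: "'a set \<Rightarrow> ('a \<Rightarrow> 'a \<Rightarrow> bool) \<Rightarrow> nat" where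
  "tau V E = card (gamma_t_sets V E)"

definition TDV :: "'a set \<Rightarrow> ('a \<Rightarrow> 'a \<Rightarrow> bool) \<Rightarrow> 'a \<Rightarrow> nat" where
  "TDV V E v = card {D \<in> gamma_t_sets V E. v \<in> D}"

definition complete_multipartite ::
  "'a set \<Rightarrow> ('a \<Rightarrow> 'a \<Rightarrow> bool) \<Rightarrow> nat \<Rightarrow> (nat \<Rightarrow> 'a set) \<Rightarrow> bool" where
  "complete_multipartite V E n P \<longleftrightarrow>
     V = (\<Union>i<n. P i) \<and>
     (\<forall>i<n. \<forall>j<n. i \<noteq> j \<longrightarrow> P i \<inter> P j = {}) \<and>
     (\<forall>u v. E u v \<longleftrightarrow> u \<in> V \<and> v \<in> V \<and> \<not> (\<exists>i<n. u \<in> P i \<and> v \<in> P i))"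

end

theory Submission
  imports Defs
begin

text \<open>In a complete multipartite graph with at least two parts every edge is a total dominating
  set, while any total dominating set contains an edge; so the \<open>\<gamma>\<^sub>t\<close>-sets are exactly the edges.
  Hence \<open>TDV(v)\<close> is the degree of \<open>v\<close>, which is \<open>|V| - a\<^sub>j\<close> for \<open>v \<in> V\<^sub>j\<close>, and counting
  incidences, \<open>2\<tau>\<close> is the sum of the degrees, \<open>\<Sum>\<^sub>j a\<^sub>j (|V| - a\<^sub>j)\<close>.\<close>

lemma total_dominating_contains_edge:
  assumes "total_dominating V E D" and "V \<noteq> {}"
  shows "\<exists>u\<in>D. \<exists>w\<in>D. E u w"
proof -
  obtain x where "x \<in> V" using assms(2) by blast
  then obtain u where u: "u \<in> D" "E x u" using assms(1) unfolding total_dominating_def by blast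
  then have "u \<in> V" using assms(1) unfolding total_dominating_def by blast
  then obtain w where "w \<in> D" "E u w" using assms(1) unfolding total_dominating_def by blast
  with u show ?thesis by blast
qed

lemma
  assumes irrefl: "\<And>u. \<not> E u u"
    and edge: "E u\<^sub>0 w\<^sub>0"
    and edge_total_dominating: "\<And>u w. E u w \<Longrightarrow> total_dominating V E {u, w}"
  shows gamma_t_eq_two_if_edges_dominate: "gamma_t V E = 2"
    and gamma_t_sets_eq_edges_if_edges_dominate:
      "gamma_t_sets V E = {{u, w} | u w. E u w}"
proof -
  have "V \<noteq> {}"
    using edge_total_dominating[OF edge] unfolding total_dominating_def by blast
  have edge_card: "card {u, w} = 2" if "E u w" for u w
    using irrefl that by (cases "u = w") auto
  have contains_edge: "\<exists>u w. E u w \<and> {u, w} \<subseteq> D" if "total_dominating V E D" for D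
    using total_dominating_contains_edge[OF that \<open>V \<noteq> {}\<close>] by blast
  show gamma_t: "gamma_t V E = 2"
    unfolding gamma_t_def
  proof (rule Least_equality)
    show "\<exists>D. total_dominating V E D \<and> finite D \<and> card D = 2"
      using edge_total_dominating[OF edge] edge_card[OF edge] by blast
  next
    fix k assume "\<exists>D. total_dominating V E D \<and> finite D \<and> card D = k"
    then obtain D where D: "total_dominating V E D" "finite D" "card D = k" by blast
    then obtain u w where "E u w" "{u, w} \<subseteq> D" using contains_edge by blast
    then show "2 \<le> k" using card_mono[OF \<open>finite D\<close>] edge_card D(3) by metis
  qed
  show "gamma_t_sets V E = {{u, w} | u w. E u w}"
  proof (intro set_eqI iffI)
    fix D assume "D \<in> gamma_t_sets V E"
    then have D: "total_dominating V E D" "finite D" "card D = 2"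
      unfolding gamma_t_sets_def gamma_t by auto
    then obtain u w where "E u w" "{u, w} \<subseteq> D" using contains_edge by blast
    moreover have "{u, w} = D"
      using card_subset_eq[OF D(2) \<open>{u, w} \<subseteq> D\<close>] edge_card[OF \<open>E u w\<close>] D(3) by simp
    ultimately show "D \<in> {{u, w} | u w. E u w}" by blast
  next
    fix D assume "D \<in> {{u, w} | u w. E u w}"
    then show "D \<in> gamma_t_sets V E"
      unfolding gamma_t_sets_def gamma_t using edge_total_dominating edge_card by auto
  qed
qed

lemma TDV_eq_degree_if_edges_dominate:
  assumes irrefl: "\<And>u. \<not> E u u" and sym: "\<And>u w. E u w \<Longrightarrow> E w u"
    and edge: "E u\<^sub>0 w\<^sub>0"
    and edge_total_dominating: "\<And>u w. E u w \<Longrightarrow> total_dominating V E {u, w}"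
  shows "TDV V E v = card {w. E v w}"
proof -
  have "{D \<in> gamma_t_sets V E. v \<in> D} = (\<lambda>w. {v, w}) ` {w. E v w}"
    using gamma_t_sets_eq_edges_if_edges_dominate[OF irrefl edge edge_total_dominating] sym
    by (auto simp: insert_commute)
  moreover have "inj_on (\<lambda>w. {v, w}) {w. E v w}"
    using irrefl by (auto simp: inj_on_def doubleton_eq_iff)
  ultimately show ?thesis
    unfolding TDV_def by (simp add: card_image)
qed

lemma sum_TDV_eq_gamma_t_mult_tau:
  assumes "finite V"
  shows "(\<Sum>v\<in>V. TDV V E v) = gamma_t V E * tau V E"
proof -
  let ?S = "gamma_t_sets V E"
  have "?S \<subseteq> Pow V"
    unfolding gamma_t_sets_def total_dominating_def by blast
  then have "finite ?S" using assms by (meson finite_Pow_iff finite_subset)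
  have "(\<Sum>v\<in>V. TDV V E v) = (\<Sum>v\<in>V. \<Sum>D\<in>?S. if v \<in> D then 1 else (0::nat))"
    unfolding TDV_def using \<open>finite ?S\<close> by (simp add: sum.If_cases Int_def)
  also have "\<dots> = (\<Sum>D\<in>?S. \<Sum>v\<in>V. if v \<in> D then 1 else (0::nat))"
    by (rule sum.swap)
  also have "\<dots> = (\<Sum>D\<in>?S. card D)"
    using \<open>?S \<subseteq> Pow V\<close> assms by (intro sum.cong) (auto simp: sum.If_cases Int_absorb1)
  also have "\<dots> = gamma_t V E * tau V E"
    unfolding tau_def gamma_t_sets_def by simp
  finally show ?thesis .
qed

locale finite_complete_multipartite =
  fixes V :: "'a set" and E :: "'a \<Rightarrow> 'a \<Rightarrow> bool" and n :: nat and P :: "nat \<Rightarrow> 'a set"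
  assumes complete_multipartite: "complete_multipartite V E n P"
    and finite_parts: "\<And>i. i < n \<Longrightarrow> finite (P i)"
begin

lemma V_eq: "V = (\<Union>i<n. P i)"
  and parts_disjoint: "\<And>i j. i < n \<Longrightarrow> j < n \<Longrightarrow> i \<noteq> j \<Longrightarrow> P i \<inter> P j = {}"
  and adjacent_iff: "E u w \<longleftrightarrow> u \<in> V \<and> w \<in> V \<and> \<not> (\<exists>i<n. u \<in> P i \<and> w \<in> P i)"
  using complete_multipartite unfolding complete_multipartite_def by auto

lemma finite_V: "finite V"
  using V_eq finite_parts by auto

lemma card_V: "card V = (\<Sum>i<n. card (P i))"
  unfolding V_eq by (rule card_UN_disjoint) (use finite_parts parts_disjoint in auto)

lemma sum_V_eq_sum_parts: "(\<Sum>v\<in>V. f v) = (\<Sum>j<n. \<Sum>v\<in>P j. f v)"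
  unfolding V_eq by (rule sum.UNION_disjoint) (use finite_parts parts_disjoint in auto)

lemma neighbourhood_eq:
  assumes "j < n" "v \<in> P j"
  shows "{w. E v w} = V - P j"
proof -
  have "v \<in> V" using assms V_eq by blast
  moreover have "(\<exists>i<n. v \<in> P i \<and> w \<in> P i) \<longleftrightarrow> w \<in> P j" for w
    using assms parts_disjoint by blast
  ultimately show ?thesis by (auto simp: adjacent_iff)
qed

lemma not_adjacent_self: "\<not> E u u"
  by (auto simp: adjacent_iff V_eq)

lemma adjacent_sym: "E u w \<Longrightarrow> E w u"
  by (auto simp: adjacent_iff)

lemma edge_total_dominating:
  assumes "E u w"
  shows "total_dominating V E {u, w}"
  unfolding total_dominating_def
proof (intro conjI ballI)
  show "{u, w} \<subseteq> V" using assms by (simp add: adjacent_iff)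
next
  fix v assume "v \<in> V"
  then obtain j where j: "j < n" "v \<in> P j" using V_eq by blast
  have "u \<notin> P j \<or> w \<notin> P j" using assms j by (auto simp: adjacent_iff)
  then show "\<exists>x\<in>{u, w}. E v x"
    using assms neighbourhood_eq[OF j] by (auto simp: adjacent_iff)
qed

lemma card_part_le: "i < n \<Longrightarrow> card (P i) \<le> card V"
  using V_eq finite_V by (intro card_mono) auto

lemma ex_edge:
  assumes "2 \<le> n" and "\<And>i. i < n \<Longrightarrow> P i \<noteq> {}"
  obtains u w where "E u w"
proof -
  obtain u w where "u \<in> P 0" "w \<in> P 1" using assms(2)[of 0] assms(2)[of 1] assms(1) by auto
  moreover have "P 1 \<subseteq> V - P 0" using parts_disjoint[of 0 1] assms(1) V_eq by auto
  ultimately have "E u w" using neighbourhood_eq[of 0 u] assms(1) by auto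
  then show thesis by (rule that)
qed

end

theorem proposition3p1:
  fixes V :: "'a set" and E :: "'a \<Rightarrow> 'a \<Rightarrow> bool" and n :: nat and P :: "nat \<Rightarrow> 'a set"
  assumes "n \<ge> 2"
    and "complete_multipartite V E n P"
    and "\<forall>i<n. finite (P i) \<and> card (P i) \<ge> 1"
  shows "real (tau V E) = (1/2) * ((\<Sum>i<n. real (card (P i)))^2 - (\<Sum>i<n. real (card (P i))^2)) \<and>
         (\<forall>j<n. \<forall>v\<in>P j. TDV V E v = (\<Sum>i<n. card (P i)) - card (P j))"
proof -
  interpret G: finite_complete_multipartite V E n P
    using assms(2,3) by unfold_locales auto
  obtain u w where "E u w"
    using G.ex_edge assms(1,3) by (metis card.empty not_one_le_zero)
  have TDV: "TDV V E v = card V - card (P j)" if "j < n" "v \<in> P j" for j v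
    using TDV_eq_degree_if_edges_dominate[OF G.not_adjacent_self G.adjacent_sym \<open>E u w\<close>
        G.edge_total_dominating]
      G.neighbourhood_eq[OF that] G.V_eq that G.finite_parts
    by (simp add: card_Diff_subset UN_upper)
  have "2 * tau V E = (\<Sum>j<n. card (P j) * (card V - card (P j)))"
    using sum_TDV_eq_gamma_t_mult_tau[OF G.finite_V, of E] G.sum_V_eq_sum_parts[of "TDV V E"]
    by (simp add: TDV gamma_t_eq_two_if_edges_dominate[OF G.not_adjacent_self \<open>E u w\<close>
        G.edge_total_dominating])
  then have "real (2 * tau V E)
      = (\<Sum>j<n. real (card (P j)) * ((\<Sum>i<n. real (card (P i))) - real (card (P j))))"
    using G.card_part_le unfolding G.card_V of_nat_sum by (auto simp: of_nat_diff intro!: sum.cong)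
  also have "\<dots> = (\<Sum>i<n. real (card (P i)))^2 - (\<Sum>i<n. real (card (P i))^2)"
    by (simp add: power2_eq_square sum_distrib_right right_diff_distrib sum_subtractf)
  finally have "real (tau V E) = (1/2) * ((\<Sum>i<n. real (card (P i)))^2 - (\<Sum>i<n. real (card (P i))^2))"
    by simp
  with TDV G.card_V show ?thesis by simp
qed

end
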